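(* Let $F$ be an order continuous Banach lattice and $E$ a closed subspace of $F$. Then the following are equivalent: $E$ is dispersed; $E$ is strictly dispersed; $E$ is weakly dispersed; $E$ is strongly dispersed. In particular, the set of dispersed closed subspaces of $F$ is open in the gap topology.
   Context: Elements $x,y$ are disjoint if $|x|\wedge|y|=0$. $\mathrm{S}_X$ is the unit sphere. $E$ is dispersed if it contains no almost disjoint sequence, i.e. no sequence $(e_n)\subset\mathrm{S}_E$ for which there is a disjoint sequence $(f_n)\subset F$ with $\|f_n-e_n\|\to0$. $E$ is strictly dispersed if there is $\delta>0$ such that no disjoint sequence $(f_n)\subset\mathrm{S}_F$ satisfies $\mathrm{dist}(f_n,E)<\delta$ for all $n$. The un-topology on $F$ has zero neighborhood base $\{f:\||f|\wedge h\|<\varepsilon\}$, $h\in F_+$, $\varepsilon>0$; the una-topology is defined the same way with $h$ ranging over the positive part of the ideal $F^a$ of order continuous elements. $E$ is weakly (resp. strongly) dispersed if some un- (resp. una-) neighborhood of $0_F$ is disjoint from $\mathrm{S}_E$. The gap topology on closed subspaces is given by the metric equal to the Hausdorff distance between unit spheres. *)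

theory Defs
  imports "HOL-Analysis.Analysis" "HOL-Library.Extended_Real"
begin

class banach_lattice = banach + lattice +
  assumes bl_add_mono: "x \<le> y \<Longrightarrow> x + z \<le> y + z"
    and bl_scale_nonneg: "0 \<le> x \<Longrightarrow> 0 \<le> c \<Longrightarrow> 0 \<le> scaleR c x"
    and bl_lattice_norm: "sup x (- x) \<le> sup y (- y) \<Longrightarrow> norm x \<le> norm y"

definition labs :: "'a::banach_lattice \<Rightarrow> 'a" where
  "labs x = sup x (- x)"

definition ldisjoint :: "'a::banach_lattice \<Rightarrow> 'a \<Rightarrow> bool" where
  "ldisjoint x y \<longleftrightarrow> inf (labs x) (labs y) = 0"

definition disjoint_seq :: "(nat \<Rightarrow> 'a::banach_lattice) \<Rightarrow> bool" where
  "disjoint_seq f \<longleftrightarrow> (\<forall>m n. m \<noteq> n \<longrightarrow> ldisjoint (f m) (f n))"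

definition unit_sphere :: "'a::real_normed_vector set \<Rightarrow> 'a set" where
  "unit_sphere E = {x \<in> E. norm x = 1}"

text \<open>Nets decreasing to 0 are represented by their ranges: nonempty downward directed
  sets whose greatest lower bound is 0 (such sets consist of positive elements).
  A decreasing net tends to 0 in norm iff the infimum of the norms is 0, since the norm
  is monotone on positive elements.\<close>

definition is_glb :: "'a::lattice \<Rightarrow> 'a set \<Rightarrow> bool" where
  "is_glb z D \<longleftrightarrow> (\<forall>d\<in>D. z \<le> d) \<and> (\<forall>w. (\<forall>d\<in>D. w \<le> d) \<longrightarrow> w \<le> z)"

definition down_directed :: "'a::lattice set \<Rightarrow> bool" where
  "down_directed D \<longleftrightarrow> D \<noteq> {} \<and> (\<forall>x\<in>D. \<forall>y\<in>D. \<exists>z\<in>D. z \<le> x \<and> z \<le> y)"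

definition decreases_to_zero :: "'a::banach_lattice set \<Rightarrow> bool" where
  "decreases_to_zero D \<longleftrightarrow> down_directed D \<and> is_glb 0 D"

definition order_continuous_BL :: "'a::banach_lattice itself \<Rightarrow> bool" where
  "order_continuous_BL _ \<longleftrightarrow>
     (\<forall>D::'a set. decreases_to_zero D \<longrightarrow> (INF x\<in>D. norm x) = 0)"

definition oc_element :: "'a::banach_lattice \<Rightarrow> bool" where
  "oc_element x \<longleftrightarrow>
     (\<forall>D. decreases_to_zero D \<and> (\<forall>d\<in>D. d \<le> labs x) \<longrightarrow> (INF d\<in>D. norm d) = 0)"

definition almost_disjoint_seq :: "'a::banach_lattice set \<Rightarrow> (nat \<Rightarrow> 'a) \<Rightarrow> bool" where
  "almost_disjoint_seq E e \<longleftrightarrow> (\<forall>n. e n \<in> unit_sphere E) \<and>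
     (\<exists>f. disjoint_seq f \<and> (\<lambda>n. norm (f n - e n)) \<longlonglongrightarrow> 0)"

definition dispersed :: "'a::banach_lattice set \<Rightarrow> bool" where
  "dispersed E \<longleftrightarrow> \<not> (\<exists>e. almost_disjoint_seq E e)"

definition strictly_dispersed :: "'a::banach_lattice set \<Rightarrow> bool" where
  "strictly_dispersed E \<longleftrightarrow> (\<exists>\<delta>>0. \<not> (\<exists>f. disjoint_seq f \<and> (\<forall>n. f n \<in> unit_sphere UNIV)
      \<and> (\<forall>n. infdist (f n) E < \<delta>)))"

definition un_basic_nbhd :: "'a::banach_lattice \<Rightarrow> real \<Rightarrow> 'a set" where
  "un_basic_nbhd h \<epsilon> = {f. norm (inf (labs f) h) < \<epsilon>}"

definition weakly_dispersed :: "'a::banach_lattice set \<Rightarrow> bool" where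
  "weakly_dispersed E \<longleftrightarrow>
     (\<exists>h \<epsilon>. 0 \<le> h \<and> \<epsilon> > 0 \<and> un_basic_nbhd h \<epsilon> \<inter> unit_sphere E = {})"

definition strongly_dispersed :: "'a::banach_lattice set \<Rightarrow> bool" where
  "strongly_dispersed E \<longleftrightarrow>
     (\<exists>h \<epsilon>. 0 \<le> h \<and> oc_element h \<and> \<epsilon> > 0 \<and> un_basic_nbhd h \<epsilon> \<inter> unit_sphere E = {})"

definition hausdorff_dist :: "'a::metric_space set \<Rightarrow> 'a set \<Rightarrow> ereal" where
  "hausdorff_dist A B =
     (if A = {} \<and> B = {} then 0
      else if A = {} \<or> B = {} then \<infinity>
      else max (SUP x\<in>A. ereal (infdist x B)) (SUP y\<in>B. ereal (infdist y A)))"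

definition gap :: "'a::real_normed_vector set \<Rightarrow> 'a set \<Rightarrow> ereal" where
  "gap E G = hausdorff_dist (unit_sphere E) (unit_sphere G)"

definition closed_subspace :: "'a::real_normed_vector set \<Rightarrow> bool" where
  "closed_subspace E \<longleftrightarrow> subspace E \<and> closed E"

definition gap_open :: "'a::real_normed_vector set set \<Rightarrow> bool" where
  "gap_open S \<longleftrightarrow> S \<subseteq> Collect closed_subspace \<and>
     (\<forall>E\<in>S. \<exists>\<epsilon>>0. \<forall>G. closed_subspace G \<and> gap E G < ereal \<epsilon> \<longrightarrow> G \<in> S)"

end

(*
  Order continuity makes disjoint order bounded sequences norm null: their partial sums
  increase and stay order bounded, and such a sequence is Cauchy because the gaps u - s n
  between its upper bounds u and its terms decrease to 0. Hence, if a set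
  {f. norm (inf |f| h) < eps} misses the unit sphere of E, no disjoint sequence of unit
  vectors stays close to E, since the overlaps inf |f n| h would have to stay large:
  weakly dispersed implies strictly dispersed, which implies dispersed.

  Conversely, if there is no such set, choose unit vectors e k of E whose moduli barely
  meet 2^k (|e 0| + ... + |e (k - 1)|). Cutting each e k off at the level
  2^k (sum of |e i| for i < k) + (sum of 2^-l |e l| for l > k) yields a disjoint sequence
  asymptotically close to e, so E is not dispersed.

  In an order continuous lattice every element is order continuous, so weak and strong
  dispersion coincide. A constant delta witnessing strict dispersion of E survives, up to
  a factor 3, the passage to any G within gap distance min delta 1 / 3 of E; this gives
  the openness of the dispersed subspaces in the gap topology.
*)

theory Submission
  imports Defs "HOL-Library.Lattice_Algebras"
begin

section \<open>Banach lattices as ordered vector spaces\<close>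

subclass (in banach_lattice) lattice_ab_group_add
  by standard (simp add: bl_add_mono add.commute)

instance banach_lattice \<subseteq> ordered_real_vector
proof
  fix x y :: "'a::banach_lattice" and a b :: real
  show "x \<le> y \<Longrightarrow> 0 \<le> a \<Longrightarrow> a *\<^sub>R x \<le> a *\<^sub>R y"
    using bl_scale_nonneg[of "y - x" a] by (simp add: scaleR_diff_right)
  show "a \<le> b \<Longrightarrow> 0 \<le> x \<Longrightarrow> a *\<^sub>R x \<le> b *\<^sub>R x"
    using bl_scale_nonneg[of x "b - a"] by (simp add: scaleR_diff_left)
qed

lemma scaleR_sup_distrib:
  fixes a b :: "'a::banach_lattice"
  assumes "0 \<le> c"
  shows "c *\<^sub>R sup a b = sup (c *\<^sub>R a) (c *\<^sub>R b)"
proof (cases "c = 0")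
  case False
  then have "c > 0" using assms by simp
  then have "sup a b \<le> sup (c *\<^sub>R a) (c *\<^sub>R b) /\<^sub>R c"
    by (intro sup_least pos_le_divideR_eq[THEN iffD2]) auto
  then have "c *\<^sub>R sup a b \<le> sup (c *\<^sub>R a) (c *\<^sub>R b)"
    using pos_le_divideR_eq[OF \<open>c > 0\<close>] by blast
  moreover have "sup (c *\<^sub>R a) (c *\<^sub>R b) \<le> c *\<^sub>R sup a b"
    by (simp add: assms scaleR_left_mono)
  ultimately show ?thesis by (rule antisym)
qed simp

lemma scaleR_inf_distrib:
  fixes a b :: "'a::banach_lattice"
  assumes "0 \<le> c"
  shows "c *\<^sub>R inf a b = inf (c *\<^sub>R a) (c *\<^sub>R b)"
  using scaleR_sup_distrib[OF assms, of "- a" "- b"]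
  by (simp only: inf_eq_neg_sup[of a b] inf_eq_neg_sup[of "c *\<^sub>R a"] scaleR_minus_right)

lemma labs_ge_self: "x \<le> labs x" and labs_ge_minus_self: "- x \<le> labs x"
  by (simp_all add: labs_def)

lemma labs_nonneg: "0 \<le> labs x"
  using add_mono[OF labs_ge_self[of x] labs_ge_minus_self[of x]] by simp

lemma labs_eq_pprt_minus_nprt: "labs x = pprt x - nprt x"
proof -
  have "sup (labs x) 0 = labs x"
    using labs_nonneg by (rule sup_absorb1)
  then show ?thesis
    by (simp add: labs_def add_sup_inf_distribs ac_simps pprt_def nprt_def)
qed

lemma labs_of_nonneg: "0 \<le> x \<Longrightarrow> labs x = x"
  by (simp add: labs_eq_pprt_minus_nprt)

lemma labs_minus [simp]: "labs (- x) = labs x"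
  by (simp add: labs_def sup_commute)

lemma labs_scaleR: "labs (c *\<^sub>R x) = \<bar>c\<bar> *\<^sub>R labs x"
proof -
  have "labs (c *\<^sub>R x) = labs (\<bar>c\<bar> *\<^sub>R x)"
  proof (cases "0 \<le> c")
    case False
    then have "\<bar>c\<bar> *\<^sub>R x = - (c *\<^sub>R x)" by simp
    then show ?thesis by (simp only: labs_minus)
  qed simp
  then show ?thesis by (simp add: labs_def scaleR_sup_distrib)
qed

lemma labs_triangle: "labs (x + y) \<le> labs x + labs y"
  using add_mono[OF labs_ge_self labs_ge_self, of x y]
    add_mono[OF labs_ge_minus_self labs_ge_minus_self, of x y]
  by (simp add: labs_def[of "x + y"])

lemma norm_labs [simp]: "norm (labs x) = norm x"
  using bl_lattice_norm[of x "labs x"] bl_lattice_norm[of "labs x" x]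
  by (simp add: labs_of_nonneg labs_nonneg labs_def[symmetric])

lemma norm_mono_nonneg: "0 \<le> (a::'a::banach_lattice) \<Longrightarrow> a \<le> b \<Longrightarrow> norm a \<le> norm b"
  using bl_lattice_norm[of a b] by (simp add: labs_def[symmetric] labs_of_nonneg)

lemma pprt_le_labs: "pprt x \<le> labs (x::'a::banach_lattice)"
  by (simp add: labs_eq_pprt_minus_nprt)

lemma minus_nprt_le_labs: "- nprt x \<le> labs (x::'a::banach_lattice)"
  by (simp add: labs_eq_pprt_minus_nprt)

lemma pprt_scaleR: "0 \<le> c \<Longrightarrow> pprt (c *\<^sub>R x) = c *\<^sub>R pprt (x::'a::banach_lattice)"
  by (simp add: pprt_def scaleR_sup_distrib)

lemma pprt_diff: "pprt (a - c) = a - inf a (c::'a::banach_lattice)"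
  by (simp add: pprt_def add_sup_distrib_left sup_commute)

lemma inf_pprt_minus_nprt: "inf (pprt x) (- nprt x) = (0::'a::banach_lattice)"
proof -
  have "pprt x = x + - nprt x"
    using prts[of x] by (simp add: algebra_simps)
  then have "inf (pprt x) (- nprt x) = inf (x + - nprt x) (0 + - nprt x)"
    by (simp only: add_0_left)
  also have "\<dots> = inf x 0 + - nprt x"
    by (rule add_inf_distrib_right[symmetric])
  finally show ?thesis by (simp only: nprt_def right_minus)
qed

lemma inf_eq_zero_mono:
  fixes u v p q :: "'a::banach_lattice"
  assumes "0 \<le> u" "u \<le> p" "0 \<le> v" "v \<le> q" "inf p q = 0"
  shows "inf u v = 0"
  using inf_mono[OF assms(2,4)] assms by (simp add: antisym)

lemma inf_scaleR_eq_zero: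
  fixes p q :: "'a::banach_lattice"
  assumes "0 \<le> p" "0 \<le> q" "inf p q = 0" "0 \<le> a" "0 \<le> b"
  shows "inf (a *\<^sub>R p) (b *\<^sub>R q) = 0"
proof (rule inf_eq_zero_mono)
  define M where "M = max a b"
  have "0 \<le> M" "a \<le> M" "b \<le> M"
    using assms by (simp_all add: M_def)
  show "a *\<^sub>R p \<le> M *\<^sub>R p" "b *\<^sub>R q \<le> M *\<^sub>R q"
    using assms \<open>a \<le> M\<close> \<open>b \<le> M\<close> by (simp_all only: scaleR_right_mono)
  show "inf (M *\<^sub>R p) (M *\<^sub>R q) = 0"
    using \<open>0 \<le> M\<close> assms(3) by (simp only: scaleR_inf_distrib[symmetric] scaleR_zero_right)
  show "0 \<le> a *\<^sub>R p" "0 \<le> b *\<^sub>R q"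
    using assms by (simp_all only: scaleR_nonneg_nonneg)
qed

lemma inf_add_le:
  fixes a b c :: "'a::banach_lattice"
  assumes "0 \<le> a" "0 \<le> b" "0 \<le> c"
  shows "inf (a + b) c \<le> inf a c + inf b c"
proof -
  define d where "d = inf (a + b) c"
  have "d - a \<le> b"
    using inf_le1[of "a + b" c] by (simp add: d_def diff_le_eq add.commute)
  moreover have "d - c \<le> b"
    using assms(2) by (simp add: d_def diff_le_eq le_infI2)
  ultimately have le_b: "d - inf a c \<le> b"
    by (simp add: add_sup_distrib_left)
  have "d - inf a c \<le> d"
    using add_left_mono[of 0 "inf a c" d] assms by (simp only: diff_le_eq add_0_right le_inf_iff)
  also have "d \<le> c" by (simp add: d_def)
  finally have "d - inf a c \<le> inf b c"
    using le_b by simp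
  then have "d \<le> inf b c + inf a c" by (simp only: diff_le_eq)
  then show ?thesis by (simp only: d_def add.commute)
qed

lemma pprt_disjoint:
  fixes a b :: "'a::banach_lattice"
  assumes "0 < s"
  shows "inf (pprt (a - inverse s *\<^sub>R b)) (pprt (b - s *\<^sub>R a)) = 0"
proof -
  define y where "y = a - inverse s *\<^sub>R b"
  have "b - s *\<^sub>R a = s *\<^sub>R (- y)"
    using assms by (simp add: y_def algebra_simps)
  then have "pprt (b - s *\<^sub>R a) = s *\<^sub>R pprt (- y)"
    using assms by (simp only: pprt_scaleR less_imp_le)
  also have "\<dots> = s *\<^sub>R (- nprt y)"
    by (simp only: pprt_neg)
  finally have "pprt (b - s *\<^sub>R a) = s *\<^sub>R (- nprt y)" .
  then show ?thesis
    using inf_scaleR_eq_zero[OF _ _ inf_pprt_minus_nprt, of y 1 s] assms by (simp add: y_def)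
qed

lemma nonneg_if_LIMSEQ_nonneg:
  fixes X :: "nat \<Rightarrow> 'a::banach_lattice"
  assumes "\<And>n. 0 \<le> X n" and "X \<longlonglongrightarrow> x"
  shows "0 \<le> x"
proof -
  have bound: "norm (nprt x) \<le> norm (X n - x)" for n
  proof -
    have "- nprt x = pprt (- x)" by (simp add: pprt_neg)
    also have "\<dots> \<le> pprt (X n - x)"
      using add_right_mono[OF assms(1)[of n], of "- x"] by (intro pprt_mono) simp
    also have "\<dots> \<le> labs (X n - x)" by (rule pprt_le_labs)
    finally show ?thesis
      using norm_mono_nonneg[of "- nprt x" "labs (X n - x)"] by simp
  qed
  have "(\<lambda>n. norm (X n - x)) \<longlonglongrightarrow> 0"
    using assms(2) by (simp add: LIM_zero_iff tendsto_norm_zero)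
  then have "norm (nprt x) \<le> 0"
    by (rule LIMSEQ_le_const) (use bound in blast)
  then show ?thesis by (simp add: zero_le_iff_zero_nprt)
qed

lemma suminf_nonneg_lattice:
  fixes f :: "nat \<Rightarrow> 'a::banach_lattice"
  assumes "summable f" and "\<And>n. 0 \<le> f n"
  shows "0 \<le> suminf f"
  by (rule nonneg_if_LIMSEQ_nonneg[OF _ summable_LIMSEQ[OF assms(1)]]) (simp add: assms(2) sum_nonneg)

lemma le_suminf_lattice:
  fixes f :: "nat \<Rightarrow> 'a::banach_lattice"
  assumes "summable f" and "\<And>n. 0 \<le> f n"
  shows "f i \<le> suminf f"
proof -
  have "f i \<le> sum f {..<Suc i}"
    using sum_mono2[of "{..<Suc i}" "{i}" f] assms(2) by simp
  moreover have "0 \<le> (\<Sum>n. f (n + Suc i))"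
    using summable_ignore_initial_segment[OF assms(1)] assms(2) by (rule suminf_nonneg_lattice)
  ultimately show ?thesis
    using suminf_split_initial_segment[OF assms(1), of "Suc i"] by (simp add: add_increasing)
qed

lemma nonpos_if_multiples_bounded:
  fixes w h :: "'a::banach_lattice"
  assumes "\<And>k::nat. real k *\<^sub>R w \<le> h"
  shows "w \<le> 0"
proof -
  have bound: "real k * norm (pprt w) \<le> norm h" for k
  proof -
    have "real k *\<^sub>R pprt w \<le> pprt h"
      using pprt_mono[OF assms[of k]] by (simp add: pprt_scaleR)
    then have "norm (real k *\<^sub>R pprt w) \<le> norm (pprt h)"
      by (intro norm_mono_nonneg) (simp_all add: scaleR_nonneg_nonneg)
    moreover have "pprt h = h" using assms[of 0] by simp
    ultimately show ?thesis by simp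
  qed
  have "\<not> 0 < norm (pprt w)"
  proof
    assume "0 < norm (pprt w)"
    then obtain k where "norm h < real k * norm (pprt w)"
      using ex_less_of_nat_mult by blast
    then show False using bound[of k] by simp
  qed
  then show ?thesis by (simp add: le_zero_iff_zero_pprt)
qed

section \<open>Disjoint order bounded sequences\<close>

lemma inf_sum_le:
  fixes g :: "'i \<Rightarrow> 'a::banach_lattice"
  assumes "\<And>i. i \<in> A \<Longrightarrow> 0 \<le> g i" and "0 \<le> c"
  shows "inf (sum g A) c \<le> (\<Sum>i\<in>A. inf (g i) c)"
  using assms(1)
proof (induction A rule: infinite_finite_induct)
  case (insert i A)
  then have "inf (g i + sum g A) c \<le> inf (g i) c + inf (sum g A) c"
    using assms(2) by (intro inf_add_le) (simp_all add: sum_nonneg)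
  also have "\<dots> \<le> inf (g i) c + (\<Sum>j\<in>A. inf (g j) c)"
    using insert by (simp add: add_left_mono)
  finally show ?case using insert by simp
qed (simp_all add: assms(2) inf_absorb1)

lemma sum_disjoint_le:
  fixes g :: "'i \<Rightarrow> 'a::banach_lattice"
  assumes "finite A" and "0 \<le> h"
    and "\<And>i. i \<in> A \<Longrightarrow> 0 \<le> g i" and "\<And>i. i \<in> A \<Longrightarrow> g i \<le> h"
    and "\<And>i j. i \<in> A \<Longrightarrow> j \<in> A \<Longrightarrow> i \<noteq> j \<Longrightarrow> inf (g i) (g j) = 0"
  shows "sum g A \<le> h"
  using assms(1,3-5)
proof (induction A rule: finite_induct)
  case (insert i A)
  have "inf (sum g A) (g i) \<le> (\<Sum>j\<in>A. inf (g j) (g i))"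
    using insert.prems by (intro inf_sum_le) auto
  also have "\<dots> = 0"
    using insert by (intro sum.neutral) (metis insertCI)
  finally have "inf (g i) (sum g A) = 0"
    using insert.prems by (simp add: antisym inf_commute sum_nonneg)
  then have "sum g (insert i A) = sup (g i) (sum g A)"
    using insert add_eq_inf_sup[of "g i" "sum g A"] by simp
  then show ?case using insert by simp
qed (simp add: assms(2))

lemma decreases_to_zero_upper_gaps:
  fixes s :: "nat \<Rightarrow> 'a::banach_lattice"
  assumes "incseq s" and "\<And>n. s n \<le> h"
  shows "decreases_to_zero {u - s n | u n. \<forall>k. s k \<le> u}" (is "decreases_to_zero ?D")
  unfolding decreases_to_zero_def down_directed_def is_glb_def
proof (intro conjI ballI allI impI)
  show "?D \<noteq> {}" using assms(2) by blast
next
  fix x y assume "x \<in> ?D" "y \<in> ?D"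
  then obtain u n u' n' where x: "x = u - s n" "\<forall>k. s k \<le> u"
    and y: "y = u' - s n'" "\<forall>k. s k \<le> u'"
    by blast
  have "inf u u' - s (max n n') \<in> ?D"
    using x(2) y(2) by force
  moreover have "inf u u' - s (max n n') \<le> x" "inf u u' - s (max n n') \<le> y"
    using x(1) y(1) assms(1) by (auto intro!: diff_mono simp: incseq_def)
  ultimately show "\<exists>z\<in>?D. z \<le> x \<and> z \<le> y" by blast
next
  fix d assume "d \<in> ?D"
  then show "0 \<le> d" by auto
next
  fix w assume w: "\<forall>d\<in>?D. w \<le> d"
  have "\<forall>j. s j \<le> h - real k *\<^sub>R w" for k
  proof (induction k)
    case (Suc k)
    have "w \<le> h - real k *\<^sub>R w - s j" for j
      using w Suc by blast
    then show ?case by (simp add: algebra_simps)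
  qed (simp add: assms(2))
  then have "real k *\<^sub>R w \<le> h - s 0" for k
    by (simp add: algebra_simps)
  then show "w \<le> 0" by (rule nonpos_if_multiples_bounded)
qed

lemma order_continuous_incseq_Cauchy:
  fixes s :: "nat \<Rightarrow> 'a::banach_lattice"
  assumes oc: "order_continuous_BL TYPE('a)" and "incseq s" and "\<And>n. s n \<le> h"
  shows "Cauchy s"
proof (rule metric_CauchyI)
  fix r :: real assume "0 < r"
  let ?D = "{u - s n | u n. \<forall>k. s k \<le> u}"
  have D: "decreases_to_zero ?D"
    using assms(2,3) by (rule decreases_to_zero_upper_gaps)
  then have "(INF d\<in>?D. norm d) < r / 2"
    using oc \<open>0 < r\<close> by (simp add: order_continuous_BL_def)
  moreover have "?D \<noteq> {}"
    using D by (simp add: decreases_to_zero_def down_directed_def)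
  ultimately obtain u n where u: "\<forall>k. s k \<le> u" and un: "norm (u - s n) < r / 2"
    using cInf_lessD[of "norm ` ?D"] by blast
  have "norm (s m - s n) < r / 2" if "n \<le> m" for m
  proof -
    have "norm (s m - s n) \<le> norm (u - s n)"
      using u assms(2) that by (intro norm_mono_nonneg) (simp_all add: incseq_def diff_right_mono)
    with un show ?thesis by simp
  qed
  then have "dist (s m) (s m') < r" if "n \<le> m" "n \<le> m'" for m m'
    using that dist_triangle_half_l[of "s m" "s n" r "s m'"] by (simp add: dist_norm)
  then show "\<exists>M. \<forall>m\<ge>M. \<forall>m'\<ge>M. dist (s m) (s m') < r" by blast
qed

lemma order_continuous_disjoint_LIMSEQ_zero:
  fixes g :: "nat \<Rightarrow> 'a::banach_lattice"
  assumes oc: "order_continuous_BL TYPE('a)"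
    and "\<And>n. 0 \<le> g n" and "\<And>n. g n \<le> h" and "\<And>m n. m \<noteq> n \<Longrightarrow> inf (g m) (g n) = 0"
  shows "g \<longlonglongrightarrow> 0"
proof -
  define s where "s n = sum g {..<n}" for n
  have "incseq s"
    unfolding s_def by (intro incseq_SucI) (simp add: assms(2))
  moreover have "s n \<le> h" for n
    unfolding s_def using assms(2-4) order_trans[OF assms(2,3)] by (intro sum_disjoint_le) auto
  ultimately have "Cauchy s"
    using oc by (intro order_continuous_incseq_Cauchy)
  then obtain L where "s \<longlonglongrightarrow> L"
    by (auto simp: Cauchy_convergent_iff convergent_def)
  then have "(\<lambda>n. s (Suc n) - s n) \<longlonglongrightarrow> L - L"
    by (intro tendsto_diff LIMSEQ_Suc)
  then show ?thesis by (simp add: s_def)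
qed

lemma infdist_lessE:
  assumes "A \<noteq> {}" and "infdist x A < d"
  obtains a where "a \<in> A" and "dist x a < d"
proof -
  have "bdd_below (dist x ` A)" by (rule bdd_belowI[of _ 0]) auto
  with assms that show ?thesis by (auto simp: infdist_def cINF_less_iff)
qed

lemma norm_sgn_diff_le:
  fixes x e :: "'b::real_normed_vector"
  assumes "norm e = 1"
  shows "norm (sgn x - e) \<le> 2 * norm (x - e)"
proof (cases "x = 0")
  case False
  have "norm (sgn x - x) = \<bar>1 - norm x\<bar>"
  proof -
    have "sgn x - x = (inverse (norm x) - 1) *\<^sub>R x"
      by (simp add: sgn_div_norm scaleR_diff_left divide_inverse_commute)
    then have "norm (sgn x - x) = \<bar>(inverse (norm x) - 1) * norm x\<bar>"
      by (simp add: abs_mult)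
    also have "(inverse (norm x) - 1) * norm x = 1 - norm x"
      using False by (simp add: field_simps)
    finally show ?thesis .
  qed
  also have "\<dots> \<le> norm (x - e)"
    using norm_triangle_ineq3[of e x] assms by (simp add: norm_minus_commute)
  finally show ?thesis
    using norm_triangle_ineq[of "sgn x - x" "x - e"] by simp
qed (simp add: assms)

lemma sgn_in_unit_sphere: "subspace E \<Longrightarrow> x \<in> E \<Longrightarrow> x \<noteq> 0 \<Longrightarrow> sgn x \<in> unit_sphere E"
  by (simp add: unit_sphere_def sgn_div_norm subspace_scale norm_sgn)

lemma unit_sphere_near:
  assumes "subspace E" and "norm x = 1" and "infdist x E < r" and "r \<le> 1"
  obtains e where "e \<in> unit_sphere E" and "norm (e - x) < 2 * r"
proof -
  have "E \<noteq> {}" using subspace_0[OF assms(1)] by blast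
  then obtain a where a: "a \<in> E" "dist x a < r"
    using assms(3) by (rule infdist_lessE)
  have "a \<noteq> 0" using a(2) assms(2,4) by auto
  show ?thesis
  proof
    show "sgn a \<in> unit_sphere E" using assms(1) a(1) \<open>a \<noteq> 0\<close> by (rule sgn_in_unit_sphere)
    have "norm (sgn a - x) \<le> 2 * norm (a - x)"
      using assms(2) by (rule norm_sgn_diff_le)
    then show "norm (sgn a - x) < 2 * r"
      using a(2) by (simp add: dist_norm norm_minus_commute)
  qed
qed

lemma ldisjoint_if_labs_le:
  "labs u \<le> p \<Longrightarrow> labs v \<le> q \<Longrightarrow> inf p q = 0 \<Longrightarrow> ldisjoint u v"
  unfolding ldisjoint_def by (rule inf_eq_zero_mono[OF labs_nonneg _ labs_nonneg])

lemma ldisjoint_scaleR: "ldisjoint x y \<Longrightarrow> ldisjoint (a *\<^sub>R x) (b *\<^sub>R y)"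
  using inf_scaleR_eq_zero[OF labs_nonneg labs_nonneg, of x y "\<bar>a\<bar>" "\<bar>b\<bar>"]
  by (simp add: ldisjoint_def labs_scaleR)

lemma strictly_dispersed_imp_dispersed:
  fixes E :: "'a::banach_lattice set"
  assumes "strictly_dispersed E"
  shows "dispersed E"
  unfolding dispersed_def
proof
  assume "\<exists>e. almost_disjoint_seq E e"
  then obtain e f where e: "\<And>n. e n \<in> unit_sphere E" and "disjoint_seq f"
    and lim: "(\<lambda>n. norm (f n - e n)) \<longlonglongrightarrow> 0"
    unfolding almost_disjoint_seq_def by blast
  obtain \<delta> where "\<delta> > 0" and no_near: "\<not> (\<exists>f. disjoint_seq f \<and> (\<forall>n. f n \<in> unit_sphere UNIV)
      \<and> (\<forall>n. infdist (f n) E < \<delta>))"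
    using assms unfolding strictly_dispersed_def by blast
  define r where "r = min (1/2) (\<delta>/2)"
  have "r > 0" using \<open>\<delta> > 0\<close> by (simp add: r_def)
  then obtain N where N: "\<And>n. n \<ge> N \<Longrightarrow> norm (f n - e n) < r"
    using LIMSEQ_D[OF lim] by fastforce
  have e_unit: "norm (e n) = 1" "e n \<in> E" for n
    using e[of n] by (simp_all add: unit_sphere_def)
  have "f (n + N) \<noteq> 0" for n
    using N[of "n + N"] e_unit(1)[of "n + N"] by (auto simp: r_def)
  then have "\<forall>n. sgn (f (n + N)) \<in> unit_sphere UNIV"
    by (simp add: unit_sphere_def norm_sgn)
  moreover have "disjoint_seq (\<lambda>n. sgn (f (n + N)))"
    using \<open>disjoint_seq f\<close> by (auto simp: disjoint_seq_def sgn_div_norm intro: ldisjoint_scaleR)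
  moreover have "infdist (sgn (f (n + N))) E < \<delta>" for n
  proof -
    have "infdist (sgn (f (n + N))) E \<le> norm (sgn (f (n + N)) - e (n + N))"
      using infdist_le[OF e_unit(2)] by (simp add: dist_norm)
    also have "\<dots> \<le> 2 * norm (f (n + N) - e (n + N))"
      using e_unit(1) by (rule norm_sgn_diff_le)
    also have "\<dots> < \<delta>"
      using N[of "n + N"] by (simp add: r_def)
    finally show ?thesis .
  qed
  ultimately show False using no_near by blast
qed

lemma norm_inf_labs_le:
  fixes x y h :: "'a::banach_lattice"
  assumes "0 \<le> h"
  shows "norm (inf (labs x) h) \<le> norm (inf (labs y) h) + norm (x - y)"
proof -
  have "inf (labs x) h \<le> inf (labs y + labs (x - y)) h"
    using labs_triangle[of y "x - y"] by (intro inf_mono) auto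
  also have "\<dots> \<le> inf (labs y) h + inf (labs (x - y)) h"
    using assms by (intro inf_add_le labs_nonneg)
  also have "\<dots> \<le> inf (labs y) h + labs (x - y)"
    by (simp add: add_left_mono)
  finally have "norm (inf (labs x) h) \<le> norm (inf (labs y) h + labs (x - y))"
    using assms by (intro norm_mono_nonneg) (simp add: labs_nonneg)
  also have "\<dots> \<le> norm (inf (labs y) h) + norm (x - y)"
    using norm_triangle_ineq[of "inf (labs y) h" "labs (x - y)"] by simp
  finally show ?thesis .
qed

lemma weakly_dispersed_imp_strictly_dispersed:
  fixes E :: "'a::banach_lattice set"
  assumes oc: "order_continuous_BL TYPE('a)" and "subspace E" and "weakly_dispersed E"
  shows "strictly_dispersed E"
proof -
  obtain h \<epsilon> where "0 \<le> h" "\<epsilon> > 0" and far: "\<And>e. e \<in> unit_sphere E \<Longrightarrow> \<epsilon> \<le> norm (inf (labs e) h)"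
    using assms(3) unfolding weakly_dispersed_def un_basic_nbhd_def
    by (metis (mono_tags) disjoint_iff mem_Collect_eq not_less)
  define \<delta> where "\<delta> = min 1 (\<epsilon>/4)"
  have "\<delta> > 0" using \<open>\<epsilon> > 0\<close> by (simp add: \<delta>_def)
  moreover have False
    if f: "disjoint_seq f" "\<forall>n. f n \<in> unit_sphere UNIV" "\<forall>n. infdist (f n) E < \<delta>" for f
  proof -
    have "\<epsilon> / 2 < norm (inf (labs (f n)) h)" for n
    proof -
      obtain e where e: "e \<in> unit_sphere E" "norm (e - f n) < 2 * \<delta>"
        using unit_sphere_near[OF assms(2), of "f n" \<delta>] f by (auto simp: unit_sphere_def \<delta>_def)
      show ?thesis
        using far[OF e(1)] norm_inf_labs_le[OF \<open>0 \<le> h\<close>, of e "f n"] e(2) by (simp add: \<delta>_def)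
    qed
    moreover have "(\<lambda>n. inf (labs (f n)) h) \<longlonglongrightarrow> 0"
    proof (rule order_continuous_disjoint_LIMSEQ_zero[OF oc, where h = h])
      show "inf (inf (labs (f m)) h) (inf (labs (f n)) h) = 0" if "m \<noteq> n" for m n
        using f(1) that \<open>0 \<le> h\<close> unfolding disjoint_seq_def ldisjoint_def
        by (intro inf_eq_zero_mono[OF _ inf_le1 _ inf_le1]) (simp_all add: labs_nonneg)
    qed (simp_all add: \<open>0 \<le> h\<close> labs_nonneg)
    then obtain n where "norm (inf (labs (f n)) h) < \<epsilon> / 2"
      using LIMSEQ_D[of _ 0 "\<epsilon> / 2"] \<open>\<epsilon> > 0\<close> by fastforce
    ultimately show False by (meson not_less_iff_gr_or_eq order_less_trans)
  qed
  ultimately show ?thesis unfolding strictly_dispersed_def by blast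
qed

lemma weakly_dispersed_iff_strongly_dispersed:
  assumes "order_continuous_BL TYPE('a::banach_lattice)"
  shows "weakly_dispersed (E :: 'a set) \<longleftrightarrow> strongly_dispersed E"
proof -
  have "oc_element h" for h :: 'a
    using assms unfolding oc_element_def order_continuous_BL_def by blast
  then show ?thesis unfolding weakly_dispersed_def strongly_dispersed_def by blast
qed

section \<open>Almost disjoint sequences from small overlaps\<close>

definition cutoff :: "'a::banach_lattice \<Rightarrow> 'a \<Rightarrow> 'a" where
  "cutoff c x = pprt (pprt x - c) - pprt (- nprt x - c)"

lemma labs_cutoff_le: "labs (cutoff c x) \<le> 2 *\<^sub>R pprt (labs x - c)"
proof -
  have "labs (cutoff c x) \<le> pprt (pprt x - c) + pprt (- nprt x - c)"
    using labs_triangle[of "pprt (pprt x - c)" "- pprt (- nprt x - c)"]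
    by (simp add: cutoff_def labs_of_nonneg)
  also have "\<dots> \<le> pprt (labs x - c) + pprt (labs x - c)"
    by (intro add_mono pprt_mono diff_right_mono pprt_le_labs minus_nprt_le_labs)
  finally show ?thesis by (simp add: scaleR_2)
qed

lemma norm_diff_cutoff_le:
  fixes c x :: "'a::banach_lattice"
  assumes "0 \<le> c"
  shows "norm (x - cutoff c x) \<le> 2 * norm (inf (labs x) c)"
proof -
  have "cutoff c x = (pprt x - inf (pprt x) c) - (- nprt x - inf (- nprt x) c)"
    by (simp only: cutoff_def pprt_diff)
  then have "x - cutoff c x = inf (pprt x) c - inf (- nprt x) c"
    using prts[of x] by (simp del: diff_inf_eq_sup add: algebra_simps)
  then have "norm (x - cutoff c x) \<le> norm (inf (pprt x) c) + norm (inf (- nprt x) c)"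
    by (simp only: norm_triangle_ineq4)
  moreover have "norm (inf (pprt x) c) \<le> norm (inf (labs x) c)"
    using assms by (intro norm_mono_nonneg inf_mono pprt_le_labs) simp_all
  moreover have "norm (inf (- nprt x) c) \<le> norm (inf (labs x) c)"
    using assms by (intro norm_mono_nonneg inf_mono minus_nprt_le_labs) simp_all
  ultimately show ?thesis by simp
qed

lemma cutoff_disjoint:
  fixes x y c d :: "'a::banach_lattice"
  assumes "0 < s" and "inverse s *\<^sub>R labs y \<le> c" and "s *\<^sub>R labs x \<le> d"
  shows "ldisjoint (cutoff c x) (cutoff d y)"
proof (rule ldisjoint_if_labs_le)
  let ?P = "pprt (labs x - inverse s *\<^sub>R labs y)" and ?Q = "pprt (labs y - s *\<^sub>R labs x)"
  have le: "pprt (labs x - c) \<le> ?P" "pprt (labs y - d) \<le> ?Q"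
    using assms(2,3) by (simp_all add: diff_left_mono)
  show "labs (cutoff c x) \<le> 2 *\<^sub>R ?P"
    by (rule order_trans[OF labs_cutoff_le scaleR_left_mono[OF le(1)]]) simp
  show "labs (cutoff d y) \<le> 2 *\<^sub>R ?Q"
    by (rule order_trans[OF labs_cutoff_le scaleR_left_mono[OF le(2)]]) simp
  show "inf (2 *\<^sub>R ?P) (2 *\<^sub>R ?Q) = 0"
    using pprt_disjoint[OF assms(1)] by (intro inf_scaleR_eq_zero) simp_all
qed

lemma norm_inf_add_le:
  fixes x a b :: "'a::banach_lattice"
  assumes "0 \<le> x" and "0 \<le> a" and "0 \<le> b"
  shows "norm (inf x (a + b)) \<le> norm (inf x a) + norm b"
proof -
  have "inf x (a + b) \<le> inf a x + inf b x"
    using inf_add_le[OF assms(2,3,1)] by (simp add: inf_commute)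
  also have "\<dots> \<le> inf x a + b"
    by (simp add: add_mono inf_commute)
  finally have "norm (inf x (a + b)) \<le> norm (inf x a + b)"
    using assms by (intro norm_mono_nonneg) simp_all
  then show ?thesis
    using norm_triangle_ineq[of "inf x a" b] by linarith
qed

lemma weighted_tail_bounds:
  fixes x :: "nat \<Rightarrow> 'a::banach_lattice"
  assumes "\<And>l. 0 \<le> x l" and "\<And>l. norm (x l) \<le> 1"
  defines "B \<equiv> \<lambda>j. \<Sum>m. (1/2::real) ^ (m + Suc j) *\<^sub>R x (m + Suc j)"
  shows "0 \<le> B j" and "norm (B j) \<le> (1/2) ^ j" and "j < l \<Longrightarrow> (1/2::real) ^ l *\<^sub>R x l \<le> B j"
proof -
  define w where "w l = (1/2::real) ^ l *\<^sub>R x l" for l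
  have w0: "0 \<le> w l" for l
    by (simp add: w_def assms(1) scaleR_nonneg_nonneg)
  have w_norm: "norm (w l) \<le> (1/2) ^ l" for l
    using assms(2)[of l] by (simp add: w_def mult_left_le)
  have "summable (\<lambda>l. norm (w l))"
    by (rule summable_comparison_test'[OF summable_geometric[of "1/2"]]) (simp_all add: w_norm)
  then have "summable (\<lambda>m. norm (w (m + Suc j)))"
    by (rule summable_ignore_initial_segment)
  then have sums: "summable (\<lambda>m. norm (w (m + Suc j)))" "summable (\<lambda>m. w (m + Suc j))"
    by (simp_all add: summable_norm_cancel)
  have B: "B j = (\<Sum>m. w (m + Suc j))" by (simp add: B_def w_def)
  show "0 \<le> B j"
    unfolding B using sums(2) w0 by (rule suminf_nonneg_lattice)
  have "norm (B j) \<le> (\<Sum>m. norm (w (m + Suc j)))"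
    unfolding B using sums(1) by (rule summable_norm)
  also have "\<dots> \<le> (\<Sum>m. (1/2) ^ Suc j * (1/2) ^ m)"
  proof (rule suminf_le)
    show "norm (w (m + Suc j)) \<le> (1/2) ^ Suc j * (1/2) ^ m" for m
      using w_norm[of "m + Suc j"] by (simp only: power_add mult.commute)
  qed (rule sums(1), simp add: summable_geometric)
  also have "\<dots> = (1/2) ^ j"
    using sums_unique[OF sums_mult[OF geometric_sums[of "1/2::real"], of "(1/2) ^ Suc j"]]
    by simp
  finally show "norm (B j) \<le> (1/2) ^ j" .
  assume "j < l"
  have "w ((l - Suc j) + Suc j) \<le> B j"
    unfolding B using sums(2) w0 by (rule le_suminf_lattice)
  with \<open>j < l\<close> show "(1/2::real) ^ l *\<^sub>R x l \<le> B j"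
    by (simp add: w_def)
qed

lemma almost_disjoint_if_small_overlaps:
  fixes e :: "nat \<Rightarrow> 'a::banach_lattice"
  assumes e_norm: "\<And>k. norm (e k) \<le> 1"
    and overlap: "\<And>k. norm (inf (labs (e k)) ((2::real) ^ k *\<^sub>R (\<Sum>i<k. labs (e i)))) < (1/2) ^ k"
  obtains f where "disjoint_seq f" and "(\<lambda>k. norm (f k - e k)) \<longlonglongrightarrow> 0"
proof
  define x where "x k = labs (e k)" for k
  define A where "A k = (2::real) ^ k *\<^sub>R (\<Sum>i<k. x i)" for k
  define B where "B j = (\<Sum>m. (1/2::real) ^ (m + Suc j) *\<^sub>R x (m + Suc j))" for j
  define f where "f j = cutoff (A j + B j) (e j)" for j
  have x: "0 \<le> x k" "norm (x k) \<le> 1" for k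
    using e_norm by (simp_all add: x_def labs_nonneg)
  have A0: "0 \<le> A k" for k
    by (simp add: A_def scaleR_nonneg_nonneg sum_nonneg x)
  note B = weighted_tail_bounds[of x, OF x, folded B_def]
  have "ldisjoint (f j) (f l)" if "j < l" for j l
  proof -
    have "2 ^ l *\<^sub>R x j \<le> A l"
      using that by (auto simp: A_def x intro!: scaleR_left_mono sum_mono2[of _ "{j}", simplified])
    moreover have "inverse (2 ^ l) *\<^sub>R x l \<le> B j"
      using B(3)[OF that] by (simp add: power_one_over inverse_eq_divide)
    ultimately show ?thesis
      unfolding f_def x_def using A0 B(1)
      by (intro cutoff_disjoint[of "2 ^ l"]) (auto intro: add_increasing add_increasing2)
  qed
  then show "disjoint_seq f"
    unfolding disjoint_seq_def by (metis ldisjoint_def inf_commute nat_neq_iff)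
  have bound: "norm (f k - e k) \<le> 4 * (1/2) ^ k" for k
  proof -
    have "norm (f k - e k) \<le> 2 * norm (inf (x k) (A k + B k))"
      unfolding f_def x_def using norm_diff_cutoff_le[of "A k + B k" "e k"] A0 B(1)
      by (simp add: norm_minus_commute)
    also have "\<dots> \<le> 2 * (norm (inf (x k) (A k)) + norm (B k))"
      using norm_inf_add_le[OF x(1)[of k] A0[of k] B(1)[of k]] by simp
    also have "\<dots> \<le> 4 * (1/2) ^ k"
      using overlap[of k] B(2)[of k] by (simp add: x_def A_def)
    finally show ?thesis .
  qed
  have "\<forall>k. norm (norm (f k - e k)) \<le> 4 * (1/2) ^ k"
    by (simp only: real_norm_def abs_norm_cancel bound simp_thms)
  moreover have "(\<lambda>k. 4 * (1/2::real) ^ k) \<longlonglongrightarrow> 0"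
    by (intro tendsto_mult_right_zero LIMSEQ_power_zero) simp
  ultimately show "(\<lambda>k. norm (f k - e k)) \<longlonglongrightarrow> 0"
    by (rule Lim_null_comparison[OF always_eventually])
qed

lemma dispersed_imp_weakly_dispersed:
  fixes E :: "'a::banach_lattice set"
  assumes "dispersed E"
  shows "weakly_dispersed E"
proof (rule ccontr)
  assume "\<not> weakly_dispersed E"
  then have "\<forall>h \<epsilon>. \<exists>e. 0 \<le> h \<and> 0 < \<epsilon> \<longrightarrow> e \<in> unit_sphere E \<and> norm (inf (labs e) h) < \<epsilon>"
    by (auto simp: weakly_dispersed_def un_basic_nbhd_def)
  then obtain pick where pick: "\<And>h \<epsilon>. 0 \<le> h \<Longrightarrow> 0 < \<epsilon> \<Longrightarrow>
      pick h \<epsilon> \<in> unit_sphere E \<and> norm (inf (labs (pick h \<epsilon>)) h) < \<epsilon>"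
    by metis
  define S where "S = rec_nat 0 (\<lambda>k s. s + labs (pick ((2::real) ^ k *\<^sub>R s) ((1/2) ^ k)))"
  define e where "e k = pick ((2::real) ^ k *\<^sub>R S k) ((1/2) ^ k)" for k
  have S: "S k = (\<Sum>i<k. labs (e i))" for k
    by (induction k) (simp_all add: S_def e_def)
  have "e k \<in> unit_sphere E \<and> norm (inf (labs (e k)) ((2::real) ^ k *\<^sub>R S k)) < (1/2) ^ k" for k
    unfolding e_def by (rule pick) (simp_all add: S sum_nonneg labs_nonneg scaleR_nonneg_nonneg)
  then have e: "e k \<in> unit_sphere E"
    and overlap: "norm (inf (labs (e k)) ((2::real) ^ k *\<^sub>R (\<Sum>i<k. labs (e i)))) < (1/2) ^ k" for k
    by (simp_all only: S)
  have "norm (e k) \<le> 1" for k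
    using e[of k] by (simp add: unit_sphere_def)
  then obtain f where "disjoint_seq f" and "(\<lambda>k. norm (f k - e k)) \<longlonglongrightarrow> 0"
    using overlap by (rule almost_disjoint_if_small_overlaps)
  with e have "almost_disjoint_seq E e"
    by (auto simp: almost_disjoint_seq_def)
  with assms show False by (simp add: dispersed_def)
qed

lemma dispersed_iff_weakly_dispersed:
  fixes E :: "'a::banach_lattice set"
  assumes "order_continuous_BL TYPE('a)" and "subspace E"
  shows "dispersed E \<longleftrightarrow> weakly_dispersed E"
  using dispersed_imp_weakly_dispersed strictly_dispersed_imp_dispersed
    weakly_dispersed_imp_strictly_dispersed[OF assms] by blast

lemma dispersed_iff_strictly_dispersed:
  fixes E :: "'a::banach_lattice set"
  assumes "order_continuous_BL TYPE('a)" and "subspace E"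
  shows "dispersed E \<longleftrightarrow> strictly_dispersed E"
  using dispersed_iff_weakly_dispersed[OF assms] strictly_dispersed_imp_dispersed
    weakly_dispersed_imp_strictly_dispersed[OF assms] by blast

section \<open>Openness in the gap topology\<close>

lemma gap_lessE:
  fixes E G :: "'a::real_normed_vector set"
  assumes "y \<in> unit_sphere G" and "gap E G < ereal r"
  obtains e where "e \<in> unit_sphere E" and "dist y e < r"
proof -
  have "unit_sphere E \<noteq> {}"
  proof
    assume "unit_sphere E = {}"
    then have "gap E G = \<infinity>" using assms(1) by (auto simp: gap_def hausdorff_dist_def)
    with assms(2) show False by simp
  qed
  have "ereal (infdist y (unit_sphere E)) \<le> (SUP y\<in>unit_sphere G. ereal (infdist y (unit_sphere E)))"
    using assms(1) by (rule SUP_upper)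
  also have "\<dots> \<le> gap E G"
    using \<open>unit_sphere E \<noteq> {}\<close> assms(1) by (auto simp: gap_def hausdorff_dist_def)
  also have "\<dots> < ereal r" by (rule assms(2))
  finally have "infdist y (unit_sphere E) < r" by simp
  with \<open>unit_sphere E \<noteq> {}\<close> obtain e where "e \<in> unit_sphere E" "dist y e < r"
    by (rule infdist_lessE)
  then show ?thesis by (rule that)
qed

lemma infdist_less_if_gap_less:
  fixes E G :: "'a::real_normed_vector set"
  assumes "subspace G" and "norm x = 1" and "infdist x G < r" and "r \<le> 1"
    and "gap E G < ereal r"
  shows "infdist x E < 3 * r"
proof -
  obtain g where g: "g \<in> unit_sphere G" "norm (g - x) < 2 * r"
    using unit_sphere_near[OF assms(1-4)] .
  obtain e where e: "e \<in> unit_sphere E" "dist g e < r"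
    using g(1) assms(5) by (rule gap_lessE)
  have "infdist x E \<le> dist x e"
    using e(1) by (intro infdist_le) (simp add: unit_sphere_def)
  also have "\<dots> \<le> dist x g + dist g e" by (rule dist_triangle)
  finally show ?thesis
    using g(2) e(2) by (simp add: dist_norm norm_minus_commute)
qed

lemma strictly_dispersed_gap_stable:
  fixes E :: "'a::banach_lattice set"
  assumes "strictly_dispersed E"
  obtains \<epsilon> where "\<epsilon> > 0" and "\<And>G. subspace G \<Longrightarrow> gap E G < ereal \<epsilon> \<Longrightarrow> strictly_dispersed G"
proof -
  obtain \<delta> where "\<delta> > 0" and no_near: "\<not> (\<exists>f. disjoint_seq f \<and> (\<forall>n. f n \<in> unit_sphere UNIV)
      \<and> (\<forall>n. infdist (f n) E < \<delta>))"
    using assms unfolding strictly_dispersed_def by blast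
  define \<epsilon> where "\<epsilon> = min \<delta> 1 / 3"
  have "\<epsilon> > 0" using \<open>\<delta> > 0\<close> by (simp add: \<epsilon>_def)
  moreover have "strictly_dispersed G" if "subspace G" and gap: "gap E G < ereal \<epsilon>" for G
  proof -
    have "infdist (f n) E < \<delta>"
      if "\<forall>n. f n \<in> unit_sphere UNIV" "\<forall>n. infdist (f n) G < \<epsilon>" for f :: "nat \<Rightarrow> 'a" and n
    proof -
      have "infdist (f n) E < 3 * \<epsilon>"
        using that gap \<open>subspace G\<close>
        by (intro infdist_less_if_gap_less) (auto simp: unit_sphere_def \<epsilon>_def)
      then show ?thesis by (simp add: \<epsilon>_def)
    qed
    then show ?thesis
      unfolding strictly_dispersed_def using \<open>\<epsilon> > 0\<close> no_near by blast
  qed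
  ultimately show ?thesis using that by blast
qed

lemma gap_open_dispersed:
  assumes "order_continuous_BL TYPE('a::banach_lattice)"
  shows "gap_open {G :: 'a set. closed_subspace G \<and> dispersed G}"
  unfolding gap_open_def
proof (intro conjI ballI)
  fix E :: "'a set" assume "E \<in> {G. closed_subspace G \<and> dispersed G}"
  then have "strictly_dispersed E"
    using dispersed_iff_strictly_dispersed[OF assms] by (auto simp: closed_subspace_def)
  then obtain \<epsilon> where "\<epsilon> > 0" and "\<And>G. subspace G \<Longrightarrow> gap E G < ereal \<epsilon> \<Longrightarrow> strictly_dispersed G"
    by (rule strictly_dispersed_gap_stable) blast
  then show "\<exists>\<epsilon>>0. \<forall>G. closed_subspace G \<and> gap E G < ereal \<epsilon> \<longrightarrow> G \<in> {G. closed_subspace G \<and> dispersed G}"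
    by (auto simp: closed_subspace_def intro: strictly_dispersed_imp_dispersed)
qed auto

theorem theorem4p5:
  fixes E :: "'a::banach_lattice set"
  assumes "order_continuous_BL TYPE('a)"
    and "closed_subspace E"
  shows "(dispersed E \<longleftrightarrow> strictly_dispersed E)
       \<and> (dispersed E \<longleftrightarrow> weakly_dispersed E)
       \<and> (dispersed E \<longleftrightarrow> strongly_dispersed E)
       \<and> gap_open {G :: 'a set. closed_subspace G \<and> dispersed G}"
proof -
  have "subspace E" using assms(2) by (simp add: closed_subspace_def)
  then show ?thesis
    using dispersed_iff_strictly_dispersed[OF assms(1)] dispersed_iff_weakly_dispersed[OF assms(1)]
      weakly_dispersed_iff_strongly_dispersed[OF assms(1)] gap_open_dispersed[OF assms(1)]
    by blast
qed

end
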